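(* Assume $\mu_Z\ge\eta$ and $\rho>\rho_0$. Then for every $z\ge0$ and $m\ge\beta^{1/(p-1)}$, the function $y\mapsto\hat v(y,z,m)$ on $[y^*(m),\beta]$ is continuous, strictly convex and decreasing.
   Context: Parameters: $\mu\in\mathbb R^d$, invertible $\sigma\in\mathbb R^{d\times d}$, $\mu_Z\in\mathbb R$, $\sigma_Z\ge0$, $\gamma\in\mathbb R^d$ with $|\gamma|=1$, $\rho>0$, $\beta>0$, $\lambda\in[0,1]$, $p<1$, $p\ne0$. Constants: $\alpha=\frac12\mu^\top(\sigma\sigma^\top)^{-1}\mu$, $\eta=\sigma_Z\gamma^\top\sigma^{-1}\mu$, $\kappa=\frac{-(\rho-\eta-\alpha)+\sqrt{(\rho-\eta-\alpha)^2+4\alpha(\rho-\mu_Z)}}{2\alpha}$, and $\rho_0=\max\{\mu_Z,2\alpha,\alpha p/(1-p)\}$ if $p\in(0,1)$, $\rho_0=\max\{\mu_Z,0\}$ if $p<0$. Free boundary. For $m\in[\beta^{1/(p-1)},\lambda^{-1}\beta^{1/(p-1)})$ (all $m\ge\beta^{1/(p-1)}$ if $\lambda=0$) put $y^*(m)=m^{p-1}$; for $\lambda>0$ and $m\ge\lambda^{-1}\beta^{1/(p-1)}$, $y^*(m)$ is the unique $y\in(0,m^{p-1}]$ solving \[ \tfrac{\beta m^{p-1}}{(\alpha+\rho)y}+\tfrac{\beta}{\alpha+\rho}\ln\tfrac{y}{\beta}+\tfrac{\rho}{(\alpha+\rho)^2}\beta^{-\rho/\alpha}y^{\frac{\alpha+\rho}{\alpha}}-\tfrac{m^{p-1}}{\alpha+\rho}\beta^{-\rho/\alpha}y^{\rho/\alpha}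 =\tfrac{\alpha\beta^{-\rho/\alpha}}{(\alpha+\rho)^2}\big(\lambda^{\frac{\alpha p-(1-p)\rho}{\alpha}}-1\big)m^{-\frac{(\alpha+\rho)(1-p)}{\alpha}}+\tfrac{\beta\lambda}{\alpha+\rho}\ln(\beta(\lambda m)^{1-p})-\tfrac{\beta}{\alpha+\rho}\ln(\beta m^{1-p})+\tfrac{\lambda\beta}{\alpha+\rho}-\tfrac{\alpha\beta}{(\alpha+\rho)^2}+\tfrac{(1-p)^2\beta(\lambda-1)}{p(\alpha+\rho)}-\tfrac{\beta(\alpha+\rho+p\alpha)(\lambda-1)}{p(\alpha+\rho)^2}+\tfrac{\beta(1-p)(\lambda-1)}{\alpha+\rho}. \] Coefficients (for $m\ge\beta^{1/(p-1)}$): $C_6(m)=\int_m^\infty\big(\frac{\alpha}{\rho(\alpha+\rho)}\ell^{p-1}\beta^{-\rho/\alpha}y^*(\ell)^{\rho/\alpha}-\frac{\alpha\beta}{(\alpha+\rho)^2}\beta^{-\frac{\alpha+\rho}{\alpha}}y^*(\ell)^{\frac{\alpha+\rho}{\alpha}}\big)d\ell$. With $A(m)=\frac{\alpha^2\beta^{-\rho/\alpha}}{(\alpha+\rho)^2(\rho(1-p)-\alpha p)}\big(\lambda^{\frac{\alpha p-(1-p)\rho}{\alpha}}-1\big)m^{\frac{\alpha p-(1-p)\rho}{\alpha}}$ (used only when $\lambda>0$) and $B(m)=\frac{\alpha^2\beta^{-\rho/\alpha}}{(\alpha+\rho)^2(\rho(1-p)-\alpha p)}m^{\frac{\alpha p-(1-p)\rho}{\alpha}}$: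 $C_1=A-\frac{\lambda\beta m}{\alpha+\rho}+\frac{\rho}{\alpha}C_6$; $C_2=\frac{\alpha}{\rho}A+C_6$; $C_4=-\frac{\alpha}{\rho}B+C_6$; for $\lambda>0$, $m\ge\lambda^{-1}\beta^{1/(p-1)}$: $C_3=A+\frac{\rho}{\alpha}C_6+\frac{\beta m}{\alpha+\rho}\big[\frac{(\alpha+\rho-p\rho-(1-p)^2(\alpha+\rho))\lambda}{p(\alpha+\rho)}-\lambda\ln(\beta(\lambda m)^{1-p})\big]$ and $C_5=\frac{\beta m}{\alpha+\rho}\big[-1+(1-\lambda)\frac{(1-p)^2(\alpha+\rho)-\alpha-\rho+p\rho}{p(\alpha+\rho)}-\lambda\ln(\beta(\lambda m)^{1-p})+\ln(\beta m^{1-p})\big]+A+\frac{\rho}{\alpha}C_6$; otherwise $C_3=-B+\frac{(1-p)^2\beta^{p/(p-1)}}{\rho(1-p)-\alpha p}+\frac{\rho}{\alpha}C_6$ and $C_5=-B+\frac{(1-p)^2\beta^{p/(p-1)}}{\rho(1-p)-\alpha p}+\frac{\rho}{\alpha}C_6+\frac{\beta m}{\alpha+\rho}\big[\frac{(1-p)^2}{p}-\frac{\alpha p+\alpha+\rho}{p(\alpha+\rho)}+\ln(\beta m^{1-p})\big]$. Dual function. For $z\ge0$, $m\ge\beta^{1/(p-1)}$, $y\in[y^*(m),\beta]$, with $\psi(y)=y-\frac{\beta^{1-\kappa}}{\kappa}y^\kappa$: $\hat v(y,z,m)=\frac1\beta C_1(m)y+\beta^{\rho/\alpha}C_2(m)y^{-\rho/\alpha}+\frac{(\lambda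 m)^p}{p\rho}+\frac{\lambda m}{\alpha+\rho}y\ln\frac y\beta+z\psi(y)$ if $(\lambda m)^{p-1}<y\le\beta$; $\hat v=\frac1\beta C_3(m)y+\beta^{\rho/\alpha}C_4(m)y^{-\rho/\alpha}+\frac{(1-p)^3}{p(\rho(1-p)-\alpha p)}y^{\frac{p}{p-1}}+z\psi(y)$ if $m^{p-1}<y\le(\lambda m)^{p-1}$; $\hat v=\frac1\beta C_5(m)y+\beta^{\rho/\alpha}C_6(m)y^{-\rho/\alpha}+\frac{m^p}{p\rho}+\frac{m}{\alpha+\rho}y\ln\frac y\beta+z\psi(y)$ if $y^*(m)\le y\le m^{p-1}$. *)

theory Defs
  imports "HOL-Analysis.Analysis"
begin

definition strict_convex_on :: "real set \<Rightarrow> (real \<Rightarrow> real) \<Rightarrow> bool" where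
  "strict_convex_on S f \<longleftrightarrow> convex S \<and>
    (\<forall>x\<in>S. \<forall>y\<in>S. x \<noteq> y \<longrightarrow> (\<forall>t. 0 < t \<and> t < 1 \<longrightarrow>
        f ((1 - t) * x + t * y) < (1 - t) * f x + t * f y))"

definition alphaC :: "real^'n \<Rightarrow> real^'n^'n \<Rightarrow> real" where
  "alphaC mu sig = (1/2) * (mu \<bullet> (matrix_inv (sig ** transpose sig) *v mu))"

definition etaC :: "real^'n \<Rightarrow> real^'n^'n \<Rightarrow> real \<Rightarrow> real^'n \<Rightarrow> real" where
  "etaC mu sig sZ gam = sZ * (gam \<bullet> (matrix_inv sig *v mu))"

definition kappaC :: "real \<Rightarrow> real \<Rightarrow> real \<Rightarrow> real \<Rightarrow> real" where
  "kappaC a e rho muZ =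
     (- (rho - e - a) + sqrt ((rho - e - a)^2 + 4 * a * (rho - muZ))) / (2 * a)"

definition rho0C :: "real \<Rightarrow> real \<Rightarrow> real \<Rightarrow> real" where
  "rho0C a muZ p = (if 0 < p then max muZ (max (2 * a) (a * p / (1 - p))) else max muZ 0)"

definition fbLHS :: "real \<Rightarrow> real \<Rightarrow> real \<Rightarrow> real \<Rightarrow> real \<Rightarrow> real \<Rightarrow> real" where
  "fbLHS a rho b p m y =
     b * m powr (p - 1) / ((a + rho) * y) + b / (a + rho) * ln (y / b)
     + rho / (a + rho)^2 * b powr (- rho / a) * y powr ((a + rho) / a)
     - m powr (p - 1) / (a + rho) * b powr (- rho / a) * y powr (rho / a)"

definition fbRHS :: "real \<Rightarrow> real \<Rightarrow> real \<Rightarrow> real \<Rightarrow> real \<Rightarrow> real \<Rightarrow> real" where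
  "fbRHS a rho b lam p m =
     a * b powr (- rho / a) / (a + rho)^2 * (lam powr ((a * p - (1 - p) * rho) / a) - 1)
        * m powr (- ((a + rho) * (1 - p) / a))
     + b * lam / (a + rho) * ln (b * (lam * m) powr (1 - p))
     - b / (a + rho) * ln (b * m powr (1 - p))
     + lam * b / (a + rho) - a * b / (a + rho)^2
     + (1 - p)^2 * b * (lam - 1) / (p * (a + rho))
     - b * (a + rho + p * a) * (lam - 1) / (p * (a + rho)^2)
     + b * (1 - p) * (lam - 1) / (a + rho)"

definition ystar :: "real \<Rightarrow> real \<Rightarrow> real \<Rightarrow> real \<Rightarrow> real \<Rightarrow> real \<Rightarrow> real" where
  "ystar a rho b lam p m =
     (if 0 < lam \<and> m \<ge> b powr (1 / (p - 1)) / lam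
      then (THE y. 0 < y \<and> y \<le> m powr (p - 1) \<and> fbLHS a rho b p m y = fbRHS a rho b lam p m)
      else m powr (p - 1))"

definition C6 :: "real \<Rightarrow> real \<Rightarrow> real \<Rightarrow> real \<Rightarrow> real \<Rightarrow> real \<Rightarrow> real" where
  "C6 a rho b lam p m = integral {m..} (\<lambda>l.
      a / (rho * (a + rho)) * l powr (p - 1) * b powr (- rho / a)
        * (ystar a rho b lam p l) powr (rho / a)
      - a * b / (a + rho)^2 * b powr (- ((a + rho) / a))
        * (ystar a rho b lam p l) powr ((a + rho) / a))"

definition Acoef :: "real \<Rightarrow> real \<Rightarrow> real \<Rightarrow> real \<Rightarrow> real \<Rightarrow> real \<Rightarrow> real" where
  "Acoef a rho b lam p m =
     a^2 * b powr (- rho / a) / ((a + rho)^2 * (rho * (1 - p) - a * p))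
     * (lam powr ((a * p - (1 - p) * rho) / a) - 1) * m powr ((a * p - (1 - p) * rho) / a)"

definition Bcoef :: "real \<Rightarrow> real \<Rightarrow> real \<Rightarrow> real \<Rightarrow> real \<Rightarrow> real" where
  "Bcoef a rho b p m =
     a^2 * b powr (- rho / a) / ((a + rho)^2 * (rho * (1 - p) - a * p))
     * m powr ((a * p - (1 - p) * rho) / a)"

definition C1 :: "real \<Rightarrow> real \<Rightarrow> real \<Rightarrow> real \<Rightarrow> real \<Rightarrow> real \<Rightarrow> real" where
  "C1 a rho b lam p m = Acoef a rho b lam p m - lam * b * m / (a + rho) + rho / a * C6 a rho b lam p m"

definition C2 :: "real \<Rightarrow> real \<Rightarrow> real \<Rightarrow> real \<Rightarrow> real \<Rightarrow> real \<Rightarrow> real" where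
  "C2 a rho b lam p m = a / rho * Acoef a rho b lam p m + C6 a rho b lam p m"

definition C4 :: "real \<Rightarrow> real \<Rightarrow> real \<Rightarrow> real \<Rightarrow> real \<Rightarrow> real \<Rightarrow> real" where
  "C4 a rho b lam p m = - (a / rho) * Bcoef a rho b p m + C6 a rho b lam p m"

definition C3 :: "real \<Rightarrow> real \<Rightarrow> real \<Rightarrow> real \<Rightarrow> real \<Rightarrow> real \<Rightarrow> real" where
  "C3 a rho b lam p m =
     (if 0 < lam \<and> m \<ge> b powr (1 / (p - 1)) / lam
      then Acoef a rho b lam p m + rho / a * C6 a rho b lam p m
           + b * m / (a + rho) *
             ((a + rho - p * rho - (1 - p)^2 * (a + rho)) * lam / (p * (a + rho))
              - lam * ln (b * (lam * m) powr (1 - p)))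
      else - Bcoef a rho b p m + (1 - p)^2 * b powr (p / (p - 1)) / (rho * (1 - p) - a * p)
           + rho / a * C6 a rho b lam p m)"

definition C5 :: "real \<Rightarrow> real \<Rightarrow> real \<Rightarrow> real \<Rightarrow> real \<Rightarrow> real \<Rightarrow> real" where
  "C5 a rho b lam p m =
     (if 0 < lam \<and> m \<ge> b powr (1 / (p - 1)) / lam
      then b * m / (a + rho) *
             (- 1 + (1 - lam) * ((1 - p)^2 * (a + rho) - a - rho + p * rho) / (p * (a + rho))
              - lam * ln (b * (lam * m) powr (1 - p)) + ln (b * m powr (1 - p)))
           + Acoef a rho b lam p m + rho / a * C6 a rho b lam p m
      else - Bcoef a rho b p m + (1 - p)^2 * b powr (p / (p - 1)) / (rho * (1 - p) - a * p)
           + rho / a * C6 a rho b lam p m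
           + b * m / (a + rho) *
             ((1 - p)^2 / p - (a * p + a + rho) / (p * (a + rho)) + ln (b * m powr (1 - p))))"

definition psiC :: "real \<Rightarrow> real \<Rightarrow> real \<Rightarrow> real" where
  "psiC k b y = y - b powr (1 - k) / k * y powr k"

(* the dual function v-hat(y,z,m); the region (lam m)^(p-1) < y is read as empty when lam = 0 *)
definition vhat :: "real \<Rightarrow> real \<Rightarrow> real \<Rightarrow> real \<Rightarrow> real \<Rightarrow> real \<Rightarrow> real \<Rightarrow> real \<Rightarrow> real \<Rightarrow> real" where
  "vhat a rho b lam p k y z m =
     (if 0 < lam \<and> (lam * m) powr (p - 1) < y then
        1 / b * C1 a rho b lam p m * y + b powr (rho / a) * C2 a rho b lam p m * y powr (- rho / a)
        + (lam * m) powr p / (p * rho) + lam * m / (a + rho) * y * ln (y / b) + z * psiC k b y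
      else if m powr (p - 1) < y then
        1 / b * C3 a rho b lam p m * y + b powr (rho / a) * C4 a rho b lam p m * y powr (- rho / a)
        + (1 - p)^3 / (p * (rho * (1 - p) - a * p)) * y powr (p / (p - 1)) + z * psiC k b y
      else
        1 / b * C5 a rho b lam p m * y + b powr (rho / a) * C6 a rho b lam p m * y powr (- rho / a)
        + m powr p / (p * rho) + m / (a + rho) * y * ln (y / b) + z * psiC k b y)"

end

theory Submission
  imports Defs "HOL-Real_Asymp.Real_Asymp"
begin

(* On each of the three regions v-hat is the sum of a part common to all of them, built from C6 and
   z psi, and a region-specific part.  The constants C1, ..., C5 are exactly those for which the
   pieces fit together with matching values and slopes at m^(p-1) and (lam m)^(p-1), so v-hat is
   differentiable on [y*(m), b] and its derivative vanishes at y = b.  That derivative is strictly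
   increasing: the common part has a nondecreasing derivative because C6 >= 0 (its integrand is
   nonnegative as y*(l) <= l^(p-1)) and kappa <= 1, and each region-specific derivative is strictly
   increasing.  Hence v-hat is strictly convex with nonpositive slope, i.e. decreasing.
   The free boundary y*(m) is well defined and lies in (0, m^(p-1)] because the left-hand side of
   its equation decreases strictly on that interval, from +infinity to at most the right-hand side. *)

section \<open>Piecewise differentiable functions and convexity\<close>

lemma DERIV_if_less_at_junction:
  assumes F: "(F has_real_derivative D) (at x0)" and H: "(H has_real_derivative D) (at x0)"
    and eq: "F x0 = H x0"
  shows "((\<lambda>x. if x0 < x then H x else F x) has_real_derivative D) (at x0)"
proof -
  let ?G = "\<lambda>x. if x0 < x then H x else F x"
  let ?q = "\<lambda>f x. (f x - f x0) / (x - x0)"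
  have "(?q F \<longlongrightarrow> D) (at x0)" and "(?q H \<longlongrightarrow> D) (at x0)"
    using F H by (simp_all add: has_field_derivative_iff)
  then have left: "(?q F \<longlongrightarrow> D) (at_left x0)" and right: "(?q H \<longlongrightarrow> D) (at_right x0)"
    by (simp_all add: filterlim_at_split)
  have "eventually (\<lambda>x. ?q F x = ?q ?G x) (at_left x0)"
    using eventually_at_left_real[of "x0 - 1" x0] by (auto elim!: eventually_mono)
  then have "(?q ?G \<longlongrightarrow> D) (at_left x0)"
    using left by (rule tendsto_cong[THEN iffD1])
  moreover have "eventually (\<lambda>x. ?q H x = ?q ?G x) (at_right x0)"
    using eventually_at_right_real[of x0 "x0 + 1"] eq by (auto elim!: eventually_mono)
  then have "(?q ?G \<longlongrightarrow> D) (at_right x0)"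
    using right by (rule tendsto_cong[THEN iffD1])
  ultimately show ?thesis
    by (simp add: has_field_derivative_iff filterlim_at_split)
qed

lemma DERIV_if_less:
  assumes F: "\<And>x. x \<in> S \<Longrightarrow> (F has_real_derivative F' x) (at x)"
    and H: "\<And>x. x \<in> S \<Longrightarrow> (H has_real_derivative H' x) (at x)"
    and S: "open S" "x0 \<in> S" "x \<in> S"
    and eq: "F x0 = H x0" and eq': "F' x0 = H' x0"
  shows "((\<lambda>x. if x0 < x then H x else F x) has_real_derivative
           (if x0 < x then H' x else F' x)) (at x)"
proof (cases x0 x rule: linorder_cases)
  case less
  have "((\<lambda>x. if x0 < x then H x else F x) has_real_derivative H' x) (at x)"
    by (rule has_field_derivative_transform_within_open[OF H[OF \<open>x \<in> S\<close>], of "{x0<..}"])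
      (use less in simp_all)
  with less show ?thesis by simp
next
  case equal
  have "(H has_real_derivative F' x0) (at x0)"
    using H[OF \<open>x0 \<in> S\<close>] eq' by simp
  from DERIV_if_less_at_junction[OF F[OF \<open>x0 \<in> S\<close>] this eq] equal show ?thesis
    by simp
next
  case greater
  have "((\<lambda>x. if x0 < x then H x else F x) has_real_derivative F' x) (at x)"
    by (rule has_field_derivative_transform_within_open[OF F[OF \<open>x \<in> S\<close>], of "{..<x0}"])
      (use greater in simp_all)
  with greater show ?thesis by simp
qed

lemma strict_mono_on_if_less:
  fixes f g :: "'a::linorder \<Rightarrow> 'b::order"
  assumes f: "strict_mono_on {lo..x0} f" and g: "strict_mono_on {x0..hi} g" and eq: "f x0 = g x0"
  shows "strict_mono_on {lo..hi} (\<lambda>x. if x0 < x then g x else f x)"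
proof (rule strict_mono_onI)
  fix u v assume u: "u \<in> {lo..hi}" and v: "v \<in> {lo..hi}" and "u < v"
  consider "v \<le> x0" | "u \<le> x0" "x0 < v" | "x0 < u"
    using not_le by blast
  then show "(if x0 < u then g u else f u) < (if x0 < v then g v else f v)"
  proof cases
    case 1
    with u v \<open>u < v\<close> show ?thesis
      by (auto intro!: strict_mono_onD[OF f])
  next
    case 2
    with u have "f u \<le> f x0"
      by (cases "u = x0") (auto intro!: less_imp_le strict_mono_onD[OF f])
    also have "\<dots> < g v"
      using 2 v eq by (auto intro!: strict_mono_onD[OF g])
    finally have "f u < g v" .
    moreover have "\<not> x0 < u"
      using 2 by (simp add: not_less)
    ultimately show ?thesis
      using 2 by simp
  next
    case 3
    with u v \<open>u < v\<close> show ?thesis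
      by (auto intro!: strict_mono_onD[OF g])
  qed
qed

lemma strict_convex_on_if_deriv_strict_mono:
  fixes f :: "real \<Rightarrow> real"
  assumes der: "\<And>x. x \<in> {lo..hi} \<Longrightarrow> (f has_real_derivative f' x) (at x)"
    and mono: "strict_mono_on {lo..hi} f'"
  shows "strict_convex_on {lo..hi} f"
proof -
  have chord: "f ((1 - t) * u + t * v) < (1 - t) * f u + t * f v"
    if uv: "lo \<le> u" "u < v" "v \<le> hi" and t: "0 < t" "t < 1" for u v t
  proof -
    define w where "w = (1 - t) * u + t * v"
    have wu: "w - u = t * (v - u)" and vw: "v - w = (1 - t) * (v - u)"
      by (simp_all add: w_def algebra_simps)
    have "0 < t * (v - u)" and "0 < (1 - t) * (v - u)"
      using uv t by simp_all
    then have "u < w" and "w < v"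
      unfolding wu[symmetric] vw[symmetric] by simp_all
    obtain \<xi>1 where \<xi>1: "u < \<xi>1" "\<xi>1 < w" "f w - f u = (w - u) * f' \<xi>1"
      using MVT2[OF \<open>u < w\<close>, of f f'] der uv \<open>w < v\<close> by auto
    obtain \<xi>2 where \<xi>2: "w < \<xi>2" "\<xi>2 < v" "f v - f w = (v - w) * f' \<xi>2"
      using MVT2[OF \<open>w < v\<close>, of f f'] der uv \<open>u < w\<close> by auto
    have "f' \<xi>1 < f' \<xi>2"
      using mono \<xi>1 \<xi>2 uv by (auto simp: strict_mono_on_def)
    then have "f' \<xi>1 * (t * (1 - t) * (v - u)) < f' \<xi>2 * (t * (1 - t) * (v - u))"
      using uv t by (intro mult_strict_right_mono) auto
    also have "f' \<xi>1 * (t * (1 - t) * (v - u)) = (1 - t) * (f w - f u)"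
      unfolding \<xi>1(3) wu by (simp add: algebra_simps)
    also have "f' \<xi>2 * (t * (1 - t) * (v - u)) = t * (f v - f w)"
      unfolding \<xi>2(3) vw by (simp add: algebra_simps)
    finally show ?thesis
      by (simp add: w_def algebra_simps)
  qed
  show ?thesis
    unfolding strict_convex_on_def
  proof (intro conjI ballI allI impI)
    fix x y t :: real
    assume x: "x \<in> {lo..hi}" and y: "y \<in> {lo..hi}" and "x \<noteq> y" and t: "0 < t \<and> t < 1"
    show "f ((1 - t) * x + t * y) < (1 - t) * f x + t * f y"
    proof (cases "x < y")
      case True
      then show ?thesis
        using chord[of x y t] x y t by simp
    next
      case False
      then have "y < x"
        using \<open>x \<noteq> y\<close> by simp
      then show ?thesis
        using chord[of y x "1 - t"] x y t by (simp add: algebra_simps)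
    qed
  qed simp
qed

lemma strict_convex_on_cong:
  assumes eq: "\<And>x. x \<in> S \<Longrightarrow> f x = g x" and f: "strict_convex_on S f"
  shows "strict_convex_on S g"
  unfolding strict_convex_on_def
proof (intro conjI ballI allI impI)
  show "convex S"
    using f by (simp add: strict_convex_on_def)
  fix x y t :: real assume x: "x \<in> S" and y: "y \<in> S" and "x \<noteq> y" and t: "0 < t \<and> t < 1"
  then have "(1 - t) * x + t * y \<in> S"
    using convexD[OF \<open>convex S\<close> x y, of "1 - t" t] by simp
  moreover have "f ((1 - t) * x + t * y) < (1 - t) * f x + t * f y"
    using f x y \<open>x \<noteq> y\<close> t unfolding strict_convex_on_def by blast
  ultimately show "g ((1 - t) * x + t * y) < (1 - t) * g x + t * g y"
    using eq x y by simp
qed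

lemma antimono_on_if_deriv_nonpos:
  fixes f :: "real \<Rightarrow> real"
  assumes der: "\<And>x. x \<in> {lo..hi} \<Longrightarrow> (f has_real_derivative f' x) (at x)"
    and nonpos: "\<And>x. x \<in> {lo..hi} \<Longrightarrow> f' x \<le> 0"
  shows "antimono_on {lo..hi} f"
proof (rule monotone_onI)
  fix u v assume u: "u \<in> {lo..hi}" and v: "v \<in> {lo..hi}" and "u \<le> v"
  show "f v \<le> f u"
  proof (rule DERIV_nonpos_imp_nonincreasing[OF \<open>u \<le> v\<close>])
    fix x assume "u \<le> x" "x \<le> v"
    then have "x \<in> {lo..hi}"
      using u v by simp
    then show "\<exists>y. (f has_real_derivative y) (at x) \<and> y \<le> 0"
      using der nonpos by blast
  qed
qed

section \<open>The free boundary\<close>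

context
  fixes a rho b p :: real
  assumes a_pos: "a > 0" and rho_pos: "rho > 0" and b_pos: "b > 0" and p_nonzero: "p \<noteq> 0"
begin

lemma fbLHS_deriv:
  assumes y: "y > 0"
  shows "(fbLHS a rho b p l has_real_derivative
    (y - l powr (p - 1)) / y * (b / ((a + rho) * y) + rho / (a * (a + rho)) * b powr (- rho / a) * y powr (rho / a)))
    (at y)"
proof -
  define S where "S = a + rho"
  have S: "S > 0" and rho_eq: "rho = S - a"
    using a_pos rho_pos by (simp_all add: S_def)
  have nonzero: "a + rho \<noteq> 0" "y \<noteq> 0" "b \<noteq> 0"
    using a_pos rho_pos y b_pos by simp_all
  have h1: "y powr ((a + rho) / a - 1) = y powr (rho / a)"
    using a_pos by (simp add: field_simps)
  have h2: "y powr (rho / a - 1) = y powr (rho / a) / y"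
    using y by (simp add: powr_diff)
  show ?thesis
    unfolding fbLHS_def
    apply (rule derivative_eq_intros refl | simp add: y b_pos nonzero)+
    apply (simp only: h1 h2)
    apply (simp only: flip: S_def)
    using a_pos b_pos y S by (simp add: field_simps power2_eq_square rho_eq)
qed

lemma fbLHS_strict_decreasing:
  assumes "0 < y1" and "y1 < y2" and "y2 \<le> l powr (p - 1)"
  shows "fbLHS a rho b p l y2 < fbLHS a rho b p l y1"
proof (rule DERIV_neg_imp_decreasing_open[OF \<open>y1 < y2\<close>])
  fix x assume "y1 < x" and "x < y2"
  then have x: "x > 0" and "(x - l powr (p - 1)) / x < 0"
    using assms by (simp_all add: divide_neg_pos)
  moreover have "b / ((a + rho) * x) + rho / (a * (a + rho)) * b powr (- rho / a) * x powr (rho / a) > 0"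
    using a_pos rho_pos b_pos x by (intro add_pos_nonneg) auto
  ultimately show "\<exists>d. (fbLHS a rho b p l has_real_derivative d) (at x) \<and> d < 0"
    using fbLHS_deriv[OF x, of l] mult_neg_pos by blast
next
  show "continuous_on {y1..y2} (fbLHS a rho b p l)"
    using assms(1) by (intro continuous_at_imp_continuous_on ballI DERIV_isCont[OF fbLHS_deriv]) auto
qed

lemma fbRHS_minus_fbLHS_at_boundary:
  assumes lam: "lam > 0" and l: "l > 0"
  defines "W \<equiv> b * (lam * l) powr (1 - p)"
  shows "fbRHS a rho b lam p l - fbLHS a rho b p l (l powr (p - 1))
    = b * lam / (a + rho)^2 * (a * W powr (- ((a + rho) / a)) + (a + rho) * ln W - a)"
proof -
  define N where "N = l powr (p - 1)"
  define Lq where "Lq = l powr (- ((a + rho) * (1 - p) / a))"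
  define V where "V = W powr (- ((a + rho) / a))"
  define Bm where "Bm = b powr (- rho / a)"
  define S where "S = a + rho"
  have N: "N > 0" and Lq: "Lq > 0" and W: "W > 0" and Bm: "Bm > 0" and V: "V > 0" and S: "S > 0"
    using l lam b_pos a_pos rho_pos by (simp_all add: N_def Lq_def W_def Bm_def V_def S_def)
  have rho_eq: "rho = S - a"
    by (simp add: S_def)
  have e1: "(p - 1) * ((a + rho) / a) = - ((a + rho) * (1 - p) / a)"
    using a_pos by (simp add: field_simps)
  have f1: "N powr ((a + rho) / a) = Lq"
    unfolding N_def Lq_def powr_powr e1 ..
  have e2: "(p - 1) * (rho / a) = - ((a + rho) * (1 - p) / a) - (p - 1)"
    using a_pos by (simp add: field_simps)
  have f2: "N powr (rho / a) = Lq / N"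
    unfolding N_def Lq_def powr_powr e2 by (rule powr_diff)
  have f3: "ln (N / b) = (p - 1) * ln l - ln b"
    using l b_pos by (simp add: N_def ln_div ln_powr)
  have f4: "ln (b * (lam * l) powr (1 - p)) = ln b + (1 - p) * (ln lam + ln l)"
    using l b_pos lam by (simp add: ln_mult ln_powr)
  have f5: "ln (b * l powr (1 - p)) = ln b + (1 - p) * ln l"
    using l b_pos by (simp add: ln_mult ln_powr)
  have lW: "ln W = ln b + (1 - p) * (ln lam + ln l)"
    using f4 by (simp add: W_def)
  have "ln (lam powr ((a * p - (1 - p) * rho) / a) * (Bm * Lq)) = ln (lam * b * V)"
    using lam b_pos l W a_pos unfolding Bm_def Lq_def V_def
    by (simp add: ln_mult ln_powr lW field_simps)
  then have f7: "lam powr ((a * p - (1 - p) * rho) / a) = lam * b * V / (Bm * Lq)"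
    using lam b_pos V Bm Lq by (simp add: field_simps)
  show ?thesis
    unfolding fbRHS_def fbLHS_def N_def[symmetric] V_def[symmetric]
    apply (simp only: f1 f2 f3 f4 f5 f7 lW flip: Bm_def Lq_def N_def)
    apply (simp only: flip: S_def)
    using a_pos b_pos lam N Lq Bm V p_nonzero S by (simp add: field_simps power2_eq_square rho_eq)
qed

lemma fbLHS_at_boundary_le_fbRHS:
  assumes lam: "lam > 0" and l: "l > 0"
  shows "fbLHS a rho b p l (l powr (p - 1)) \<le> fbRHS a rho b lam p l"
proof -
  define W where "W = b * (lam * l) powr (1 - p)"
  define q where "q = (a + rho) / a"
  have W: "W > 0"
    using l lam b_pos by (simp add: W_def)
  have "ln (W powr q) \<ge> 1 - 1 / W powr q"
    using ln_le_minus_one[of "1 / W powr q"] W by (simp add: ln_div)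
  then have "q * ln W \<ge> 1 - W powr (- q)"
    using W by (simp add: ln_powr powr_minus divide_inverse)
  then have "a * W powr (- ((a + rho) / a)) + (a + rho) * ln W - a \<ge> 0"
    using a_pos unfolding q_def by (simp add: field_simps)
  then have "b * lam / (a + rho)^2 * (a * W powr (- ((a + rho) / a)) + (a + rho) * ln W - a) \<ge> 0"
    using b_pos lam by simp
  with fbRHS_minus_fbLHS_at_boundary[OF lam l] show ?thesis
    by (simp add: W_def)
qed

lemma fbLHS_tendsto_at_top:
  assumes l: "l > 0"
  shows "filterlim (fbLHS a rho b p l) at_top (at_right 0)"
proof -
  define N where "N = l powr (p - 1)"
  define C where "C = b * ln b + N * b powr (- rho / a) * N powr (rho / a)"
  have N: "N > 0"
    using l by (simp add: N_def)
  have "filterlim (\<lambda>y. (b * N / y + b * ln y - C) / (a + rho)) at_top (at_right 0)"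
    using a_pos rho_pos b_pos N by real_asymp
  moreover have "eventually (\<lambda>y. (b * N / y + b * ln y - C) / (a + rho) \<le> fbLHS a rho b p l y) (at_right 0)"
    using eventually_at_right_real[OF N]
  proof (rule eventually_mono)
    fix y assume y: "y \<in> {0<..<N}"
    have "N * b powr (- rho / a) * y powr (rho / a) \<le> N * b powr (- rho / a) * N powr (rho / a)"
      using y N a_pos rho_pos by (intro mult_left_mono powr_mono2) auto
    moreover have "0 \<le> rho / (a + rho) * b powr (- rho / a) * y powr ((a + rho) / a)"
      using a_pos rho_pos by simp
    moreover have "(a + rho) * fbLHS a rho b p l y = b * N / y + b * ln (y / b)
        + rho / (a + rho) * b powr (- rho / a) * y powr ((a + rho) / a)
        - N * b powr (- rho / a) * y powr (rho / a)"
    proof -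
      define S where "S = a + rho"
      have "S > 0"
        using a_pos rho_pos by (simp add: S_def)
      then show ?thesis
        using y unfolding fbLHS_def N_def S_def[symmetric] by (simp add: field_simps power2_eq_square)
    qed
    moreover have "ln (y / b) = ln y - ln b"
      using y b_pos by (simp add: ln_div)
    ultimately have "b * N / y + b * ln y - C \<le> (a + rho) * fbLHS a rho b p l y"
      unfolding C_def by (simp add: algebra_simps)
    then show "(b * N / y + b * ln y - C) / (a + rho) \<le> fbLHS a rho b p l y"
      using a_pos rho_pos by (simp add: divide_le_eq mult.commute)
  qed
  ultimately show ?thesis
    by (rule filterlim_at_top_mono)
qed

lemma fbLHS_eq_fbRHS_ex1:
  assumes lam: "lam > 0" and l: "l > 0"
  shows "\<exists>!y. 0 < y \<and> y \<le> l powr (p - 1) \<and> fbLHS a rho b p l y = fbRHS a rho b lam p l"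
proof (rule ex_ex1I)
  have "eventually (\<lambda>y. fbRHS a rho b lam p l \<le> fbLHS a rho b p l y \<and> y \<in> {0<..<l powr (p - 1)})
      (at_right 0)"
    using fbLHS_tendsto_at_top[OF l] eventually_at_right_real[of 0 "l powr (p - 1)"] l
    by (auto simp: filterlim_at_top intro: eventually_conj)
  then obtain y0 where y0: "0 < y0" "y0 < l powr (p - 1)" "fbRHS a rho b lam p l \<le> fbLHS a rho b p l y0"
    using eventually_happens'[of "at_right (0::real)"] by auto
  moreover have "continuous_on {y0..l powr (p - 1)} (fbLHS a rho b p l)"
    using y0(1) by (intro continuous_at_imp_continuous_on ballI DERIV_isCont[OF fbLHS_deriv]) auto
  ultimately obtain y where "y0 \<le> y" "y \<le> l powr (p - 1)" "fbLHS a rho b p l y = fbRHS a rho b lam p l"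
    using IVT2'[of "fbLHS a rho b p l" "l powr (p - 1)" "fbRHS a rho b lam p l" y0]
      fbLHS_at_boundary_le_fbRHS[OF lam l] by auto
  with y0 show "\<exists>y. 0 < y \<and> y \<le> l powr (p - 1) \<and> fbLHS a rho b p l y = fbRHS a rho b lam p l"
    by (intro exI[of _ y]) auto
next
  fix y1 y2
  assume "0 < y1 \<and> y1 \<le> l powr (p - 1) \<and> fbLHS a rho b p l y1 = fbRHS a rho b lam p l"
    and "0 < y2 \<and> y2 \<le> l powr (p - 1) \<and> fbLHS a rho b p l y2 = fbRHS a rho b lam p l"
  then show "y1 = y2"
    using fbLHS_strict_decreasing[of y1 y2 l] fbLHS_strict_decreasing[of y2 y1 l]
    by (cases y1 y2 rule: linorder_cases) auto
qed

lemma ystar_pos_le: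
  assumes l: "l \<ge> b powr (1 / (p - 1))"
  shows "0 < ystar a rho b lam p l" and "ystar a rho b lam p l \<le> l powr (p - 1)"
proof -
  have "l > 0"
    using l b_pos by (smt (verit) powr_gt_zero)
  then have "0 < ystar a rho b lam p l \<and> ystar a rho b lam p l \<le> l powr (p - 1)"
    using theI'[OF fbLHS_eq_fbRHS_ex1[of lam l]] by (simp add: ystar_def)
  then show "0 < ystar a rho b lam p l" and "ystar a rho b lam p l \<le> l powr (p - 1)"
    by simp_all
qed

lemma C6_integrand_nonneg:
  assumes l: "l \<ge> b powr (1 / (p - 1))"
  shows "0 \<le> a / (rho * (a + rho)) * l powr (p - 1) * b powr (- rho / a) * ystar a rho b lam p l powr (rho / a)
      - a * b / (a + rho)^2 * b powr (- ((a + rho) / a)) * ystar a rho b lam p l powr ((a + rho) / a)"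
proof -
  define y where "y = ystar a rho b lam p l"
  define P where "P = a / (a + rho) * b powr (- rho / a) * y powr (rho / a)"
  have y: "0 < y" "y \<le> l powr (p - 1)"
    unfolding y_def using l by (rule ystar_pos_le)+
  have "b * b powr (- ((a + rho) / a)) = b powr (1 + - ((a + rho) / a))"
    unfolding powr_add using b_pos by simp
  also have "1 + - ((a + rho) / a) = - rho / a"
    using a_pos by (simp add: field_simps)
  finally have "b * b powr (- ((a + rho) / a)) = b powr (- rho / a)" .
  moreover have "(a + rho) / a = 1 + rho / a"
    using a_pos by (simp add: field_simps)
  then have "y powr ((a + rho) / a) = y * y powr (rho / a)"
    using y by (simp add: powr_add)
  ultimately have "a * b / (a + rho)^2 * b powr (- ((a + rho) / a)) * y powr ((a + rho) / a)
      = P * (y / (a + rho))"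
    by (simp add: P_def power2_eq_square)
  also have "\<dots> \<le> P * (l powr (p - 1) / rho)"
    using y a_pos rho_pos by (intro mult_left_mono frac_le) (auto simp: P_def)
  also have "\<dots> = a / (rho * (a + rho)) * l powr (p - 1) * b powr (- rho / a) * y powr (rho / a)"
    by (simp add: P_def algebra_simps)
  finally show ?thesis
    by (simp add: y_def)
qed

lemma C6_nonneg:
  assumes "m \<ge> b powr (1 / (p - 1))"
  shows "C6 a rho b lam p m \<ge> 0"
proof -
  \<comment> \<open>No integrability is needed: a non-integrable function has integral 0.\<close>
  have nonneg_integral: "0 \<le> integral S f" if "\<And>x. x \<in> S \<Longrightarrow> 0 \<le> f x" for S and f :: "real \<Rightarrow> real"
    using integral_component_nonneg[of 1 S f] that by simp
  show ?thesis
    unfolding C6_def by (rule nonneg_integral, rule C6_integrand_nonneg) (use assms in auto)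
qed

end

section \<open>The dual function\<close>

text \<open>The rational identities behind the matching of values and slopes of v-hat at
  \<open>m powr (p - 1)\<close> (the first two) and at \<open>(lam * m) powr (p - 1)\<close> (the last two).\<close>

lemma smooth_fit_identities:
  fixes a rho p :: real
  assumes "a > 0" and "rho > 0" and "p \<noteq> 0" and "rho * (1 - p) - a * p > 0"
  defines "S \<equiv> a + rho" and "Dd \<equiv> rho * (1 - p) - a * p"
  defines "K5 \<equiv> (1 - p)^2 / p - (a * p + a + rho) / (p * (a + rho))"
  defines "c3 \<equiv> (a + rho - p * rho - (1 - p)^2 * (a + rho)) / (p * (a + rho))"
  shows "K5 / S + 1 / (p * rho) + a^3 / (rho * S^2 * Dd) - (1 - p)^3 / (p * Dd) = 0"
    and "K5 / S + 1 / S - a^2 / (S^2 * Dd) + (1 - p)^2 / Dd = 0"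
    and "- 1 / S + a^3 / (rho * S^2 * Dd) + 1 / (p * rho) - c3 / S - (1 - p)^3 / (p * Dd) = 0"
    and "(1 - p)^2 / Dd - a^2 / (S^2 * Dd) - c3 / S = 0"
proof -
  have S: "S \<noteq> 0" and DD: "Dd \<noteq> 0" and rr: "rho \<noteq> 0"
    using assms by (simp_all add: S_def Dd_def)
  have K5: "K5 = (1 - p)^2 / p - (a * p + S) / (p * S)"
    by (simp add: K5_def S_def add.assoc)
  have c3: "c3 = (S - p * rho - (1 - p)^2 * S) / (p * S)"
    by (simp add: c3_def S_def)
  have r: "rho = S - a" by (simp add: S_def)
  have Dr: "Dd = (S - a) * (1 - p) - a * p" by (simp add: Dd_def S_def)
  show "K5 / S + 1 / (p * rho) + a^3 / (rho * S^2 * Dd) - (1 - p)^3 / (p * Dd) = 0"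
    unfolding K5 using S DD rr assms(3)
    apply (simp add: field_simps)
    apply (simp add: Dr r algebra_simps power2_eq_square power3_eq_cube)
    done
  show "K5 / S + 1 / S - a^2 / (S^2 * Dd) + (1 - p)^2 / Dd = 0"
    unfolding K5 using S DD rr assms(3)
    apply (simp add: field_simps)
    apply (simp add: Dr r algebra_simps power2_eq_square power3_eq_cube)
    done
  show "- 1 / S + a^3 / (rho * S^2 * Dd) + 1 / (p * rho) - c3 / S - (1 - p)^3 / (p * Dd) = 0"
    unfolding c3 using S DD rr assms(3)
    apply (simp add: field_simps)
    apply (simp add: Dr r algebra_simps power2_eq_square power3_eq_cube)
    done
  show "(1 - p)^2 / Dd - a^2 / (S^2 * Dd) - c3 / S = 0"
    unfolding c3 using S DD rr assms(3)
    apply (simp add: field_simps)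
    apply (simp add: Dr r algebra_simps power2_eq_square power3_eq_cube)
    done
qed

locale vhat_setting =
  fixes a rho b lam p k z m :: real
  assumes a_pos: "a > 0" and rho_pos: "rho > 0" and b_pos: "b > 0"
    and lam_le_1: "lam \<le> 1" and p_lt_1: "p < 1" and p_nonzero: "p \<noteq> 0"
    and denom_pos: "rho * (1 - p) - a * p > 0" and k_pos: "0 < k" and k_le_1: "k \<le> 1"
    and z_nonneg: "z \<ge> 0" and m_ge: "m \<ge> b powr (1 / (p - 1))"
begin

definition "ym = m powr (p - 1)"
definition "ylm = (lam * m) powr (p - 1)"
abbreviation "upper_nonempty \<equiv> 0 < lam \<and> b powr (1 / (p - 1)) / lam \<le> m"

definition "C6m = C6 a rho b lam p m"
definition "Am = Acoef a rho b lam p m"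
definition "Bm = Bcoef a rho b p m"
definition "C3r = C3 a rho b lam p m - rho / a * C6m"
definition "C5r = C5 a rho b lam p m - rho / a * C6m"
definition "K5 = (1 - p)^2 / p - (a * p + a + rho) / (p * (a + rho))"
definition "c3 = (a + rho - p * rho - (1 - p)^2 * (a + rho)) / (p * (a + rho))"
definition "ln_bm = ln (b * m powr (1 - p))"
definition "expo = (a * p - (1 - p) * rho) / a"
definition "bpow = b powr (- rho / a)"

text \<open>\<open>common\<close> collects the terms that occur identically in all three formulas of \<^const>\<open>vhat\<close>;
  \<open>upper\<close>, \<open>middle\<close> and \<open>lower\<close> are the remaining parts on \<open>ylm < y\<close>, \<open>ym < y \<le> ylm\<close>
  and \<open>y \<le> ym\<close>.\<close>

definition "common y = 1 / b * (rho / a * C6m) * y + b powr (rho / a) * C6m * y powr (- rho / a) + z * psiC k b y"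
definition "common' y = rho / a * C6m / b - rho / a * C6m * b powr (rho / a) * y powr (- rho / a - 1)
   + z * (1 - b powr (1 - k) * y powr (k - 1))"
definition "upper y = (Am / b - lam * m / (a + rho)) * y + b powr (rho / a) * (a / rho * Am) * y powr (- rho / a)
   + (lam * m) powr p / (p * rho) + lam * m / (a + rho) * y * ln (y / b)"
definition "upper' y = Am / b - lam * m / (a + rho) - Am * b powr (rho / a) * y powr (- rho / a - 1)
   + lam * m / (a + rho) * (ln (y / b) + 1)"
definition "middle y = C3r / b * y - a / rho * Bm * b powr (rho / a) * y powr (- rho / a)
   + (1 - p)^3 / (p * (rho * (1 - p) - a * p)) * y powr (p / (p - 1))"
definition "middle' y = C3r / b + Bm * b powr (rho / a) * y powr (- rho / a - 1)
   - (1 - p)^2 / (rho * (1 - p) - a * p) * y powr (1 / (p - 1))"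
definition "expo2 = 1 / (p - 1) + rho / a + 1"
definition "middle'' y = y powr (- rho / a - 2) * ((1 - p) / (rho * (1 - p) - a * p) * y powr expo2
   - (rho / a + 1) * Bm * b powr (rho / a))"
definition "lower y = C5r / b * y + m powr p / (p * rho) + m / (a + rho) * y * ln (y / b)"
definition "lower' y = C5r / b + m / (a + rho) * (ln (y / b) + 1)"

definition "v_upper y = common y + upper y"
definition "v_middle y = common y + middle y"
definition "v_lower y = common y + lower y"
definition "v_upper' y = common' y + upper' y"
definition "v_middle' y = common' y + middle' y"
definition "v_lower' y = common' y + lower' y"

lemma nonzero: "a \<noteq> 0" "b \<noteq> 0" "rho \<noteq> 0" "p \<noteq> 0" "a + rho \<noteq> 0" "p - 1 \<noteq> 0"
  "rho * (1 - p) - a * p \<noteq> 0"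
  using a_pos b_pos rho_pos p_nonzero p_lt_1 denom_pos by auto

lemma m_pos: "m > 0"
proof -
  have "0 < b powr (1 / (p - 1))"
    using b_pos by simp
  with m_ge show ?thesis
    by linarith
qed

lemma ym_pos: "ym > 0"
  using m_pos by (simp add: ym_def)

lemma ylm_pos: "lam > 0 \<Longrightarrow> ylm > 0"
  using m_pos by (simp add: ylm_def)

lemma common_deriv: "y > 0 \<Longrightarrow> (common has_real_derivative common' y) (at y)"
proof -
  assume y: "y > 0"
  show ?thesis
    unfolding common_def common'_def psiC_def
    apply (rule derivative_eq_intros refl | simp add: y b_pos nonzero)+
    using k_pos a_pos b_pos by (simp add: field_simps)
qed

lemma upper_deriv: "y > 0 \<Longrightarrow> (upper has_real_derivative upper' y) (at y)"
proof -
  assume y: "y > 0"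
  define S where "S = a + rho"
  have S: "S \<noteq> 0" using a_pos rho_pos by (simp add: S_def)
  show ?thesis
    unfolding upper_def upper'_def
    apply (rule derivative_eq_intros refl | simp add: y b_pos nonzero)+
    apply (simp only: flip: S_def)
    using a_pos rho_pos b_pos S y by (simp add: field_simps)
qed

lemma middle_deriv: "y > 0 \<Longrightarrow> (middle has_real_derivative middle' y) (at y)"
proof -
  assume y: "y > 0"
  have e: "p / (p - 1) - 1 = 1 / (p - 1)"
    using p_lt_1 by (simp add: field_simps)
  define Dd where "Dd = rho * (1 - p) - a * p"
  have DD: "Dd \<noteq> 0"
    using denom_pos by (simp add: Dd_def)
  show ?thesis
    unfolding middle_def middle'_def
    apply (rule derivative_eq_intros refl | simp add: y nonzero)+
    apply (simp only: e flip: Dd_def)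
    using nonzero DD by (simp add: field_simps power3_eq_cube power2_eq_square)
qed

lemma lower_deriv: "y > 0 \<Longrightarrow> (lower has_real_derivative lower' y) (at y)"
proof -
  assume y: "y > 0"
  define S where "S = a + rho"
  have S: "S \<noteq> 0" using a_pos rho_pos by (simp add: S_def)
  show ?thesis
    unfolding lower_def lower'_def
    apply (rule derivative_eq_intros refl | simp add: y b_pos nonzero)+
    apply (simp only: flip: S_def)
    using a_pos rho_pos b_pos S y by (simp add: field_simps)
qed

lemma vhat_eq_regions:
  "vhat a rho b lam p k y z m =
     (if 0 < lam \<and> ylm < y then v_upper y else if ym < y then v_middle y else v_lower y)"
proof -
  define S where "S = a + rho"
  have S: "S \<noteq> 0"
    using a_pos rho_pos by (simp add: S_def)
  have "1 / b * C1 a rho b lam p m * y + b powr (rho / a) * C2 a rho b lam p m * y powr (- rho / a)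
      + (lam * m) powr p / (p * rho) + lam * m / (a + rho) * y * ln (y / b) + z * psiC k b y
      = common y + upper y"
    unfolding common_def upper_def C1_def C2_def Am_def C6m_def
    by (simp only: flip: S_def) (use nonzero S in \<open>simp add: field_simps\<close>)
  moreover have "1 / b * C3 a rho b lam p m * y + b powr (rho / a) * C4 a rho b lam p m * y powr (- rho / a)
      + (1 - p)^3 / (p * (rho * (1 - p) - a * p)) * y powr (p / (p - 1)) + z * psiC k b y
      = common y + middle y"
    unfolding common_def middle_def C4_def C3r_def Bm_def C6m_def using nonzero by (simp add: field_simps)
  moreover have "1 / b * C5 a rho b lam p m * y + b powr (rho / a) * C6 a rho b lam p m * y powr (- rho / a)
      + m powr p / (p * rho) + m / (a + rho) * y * ln (y / b) + z * psiC k b y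
      = common y + lower y"
    unfolding common_def lower_def C5r_def C6m_def
    by (simp only: flip: S_def) (use nonzero S in \<open>simp add: field_simps\<close>)
  ultimately show ?thesis
    unfolding vhat_def ym_def ylm_def v_upper_def v_middle_def v_lower_def by presburger
qed

lemma threshold_powr_eqs:
  assumes n: "n > 0"
  shows "n powr p = n * n powr (p - 1)"
    and "(n powr (p - 1)) powr (p / (p - 1)) = n * n powr (p - 1)"
    and "(n powr (p - 1)) powr (1 / (p - 1)) = n"
    and "ln (n powr (p - 1) / b) = - ln (b * n powr (1 - p))"
    and "n powr expo * (n powr (p - 1)) powr (- rho / a) = n * n powr (p - 1)"
proof -
  have pm: "p - 1 \<noteq> 0" using p_lt_1 by simp
  have "n powr (1 + (p - 1)) = n powr 1 * n powr (p - 1)" by (rule powr_add)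
  then show 1: "n powr p = n * n powr (p - 1)" using n by simp
  show "(n powr (p - 1)) powr (p / (p - 1)) = n * n powr (p - 1)"
    using pm 1 by (simp add: powr_powr)
  show "(n powr (p - 1)) powr (1 / (p - 1)) = n"
    using pm n by (simp add: powr_powr)
  show "ln (n powr (p - 1) / b) = - ln (b * n powr (1 - p))"
    using n b_pos by (simp add: ln_div ln_mult ln_powr algebra_simps)
  have "expo + (p - 1) * (- rho / a) = p"
    using a_pos by (simp add: expo_def field_simps)
  then show "n powr expo * (n powr (p - 1)) powr (- rho / a) = n * n powr (p - 1)"
    using 1 by (simp add: powr_powr powr_add[symmetric])
qed

lemma bpow_inverse: "b powr (rho / a) * bpow = 1"
  using b_pos by (simp add: bpow_def powr_add[symmetric])

lemma Bm_eq: "Bm = a^2 * bpow / ((a + rho)^2 * (rho * (1 - p) - a * p)) * m powr expo"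
  by (simp add: Bm_def Bcoef_def bpow_def expo_def)

lemma Am_eq: "Am = (lam powr expo - 1) * Bm"
  by (simp add: Am_def Acoef_def Bm_def Bcoef_def expo_def)

lemma Bm_eq_at_ym:
  "Bm = a^2 / ((a + rho)^2 * (rho * (1 - p) - a * p)) * (m * ym) / (b powr (rho / a) * ym powr (- rho / a))"
proof -
  have "Bm * (b powr (rho / a) * ym powr (- rho / a))
      = a^2 / ((a + rho)^2 * (rho * (1 - p) - a * p)) * (b powr (rho / a) * bpow) * (m powr expo * ym powr (- rho / a))"
    by (simp add: Bm_eq)
  also have "\<dots> = a^2 / ((a + rho)^2 * (rho * (1 - p) - a * p)) * (m * ym)"
    unfolding bpow_inverse ym_def threshold_powr_eqs(5)[OF m_pos] by simp
  finally have "Bm * (b powr (rho / a) * ym powr (- rho / a))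
      = a^2 / ((a + rho)^2 * (rho * (1 - p) - a * p)) * (m * ym)" .
  moreover have "b powr (rho / a) * ym powr (- rho / a) \<noteq> 0"
    using b_pos ym_pos by simp
  ultimately show ?thesis
    by (intro eq_divide_imp)
qed

lemma Am_eq_at_ylm:
  assumes lam: "lam > 0"
  shows "Am = (a^2 / ((a + rho)^2 * (rho * (1 - p) - a * p)) * ((lam * m) * ylm)
      - Bm * b powr (rho / a) * ylm powr (- rho / a)) / (b powr (rho / a) * ylm powr (- rho / a))"
proof -
  have n: "lam * m > 0"
    using lam m_pos by simp
  have "lam powr expo * Bm * b powr (rho / a) * ylm powr (- rho / a)
      = a^2 / ((a + rho)^2 * (rho * (1 - p) - a * p)) * (b powr (rho / a) * bpow)
        * ((lam powr expo * m powr expo) * ylm powr (- rho / a))"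
    by (simp add: Bm_eq)
  also have "\<dots> = a^2 / ((a + rho)^2 * (rho * (1 - p) - a * p)) * ((lam * m) * ylm)"
    unfolding bpow_inverse ylm_def powr_mult[symmetric] threshold_powr_eqs(5)[OF n] by simp
  finally have "Am * (b powr (rho / a) * ylm powr (- rho / a))
      = a^2 / ((a + rho)^2 * (rho * (1 - p) - a * p)) * ((lam * m) * ylm) - Bm * b powr (rho / a) * ylm powr (- rho / a)"
    unfolding Am_eq by (simp add: algebra_simps)
  moreover have "b powr (rho / a) * ylm powr (- rho / a) \<noteq> 0"
    using b_pos ylm_pos[OF lam] by simp
  ultimately show ?thesis
    by (intro eq_divide_imp)
qed

lemma powr_exp_minus_1: "y > 0 \<Longrightarrow> y powr (- rho / a - 1) = y powr (- rho / a) / y"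
  by (simp add: powr_diff)

lemma ym_le_b: "ym \<le> b"
proof -
  have "ym \<le> (b powr (1 / (p - 1))) powr (p - 1)"
    unfolding ym_def using m_ge p_lt_1 b_pos by (intro powr_mono2') auto
  also have "\<dots> = b" using p_lt_1 b_pos by (simp add: powr_powr)
  finally show ?thesis .
qed

lemma ylm_le_b:
  assumes "upper_nonempty"
  shows "ylm \<le> b"
proof -
  have "b powr (1 / (p - 1)) \<le> lam * m"
    using assms by (auto simp: pos_divide_le_eq mult.commute)
  then have "ylm \<le> (b powr (1 / (p - 1))) powr (p - 1)"
    unfolding ylm_def using p_lt_1 b_pos by (intro powr_mono2') auto
  also have "\<dots> = b"
    using p_lt_1 b_pos by (simp add: powr_powr)
  finally show ?thesis .
qed

lemma ylm_gt_b:
  assumes "\<not> upper_nonempty" and "lam > 0"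
  shows "ylm > b"
proof -
  have "lam * m < b powr (1 / (p - 1))"
    using assms by (simp add: divide_le_eq mult.commute not_le)
  have "b = (b powr (1 / (p - 1))) powr (p - 1)"
    using p_lt_1 b_pos by (simp add: powr_powr)
  also have "\<dots> < ylm"
    unfolding ylm_def using \<open>lam * m < _\<close> p_lt_1 b_pos assms(2) m_pos by (intro powr_less_mono2_neg) auto
  finally show ?thesis .
qed

lemma ym_le_ylm: "lam > 0 \<Longrightarrow> ym \<le> ylm"
  unfolding ym_def ylm_def using lam_le_1 m_pos p_lt_1 by (intro powr_mono2') (auto simp: mult_le_cancel_right1)

lemma ystar_pos_le_ym: "0 < ystar a rho b lam p m" "ystar a rho b lam p m \<le> ym"
  using ystar_pos_le[OF a_pos rho_pos b_pos p_nonzero m_ge] by (auto simp: ym_def)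

lemma C5r_minus_C3r: "C5r - C3r = b * m / (a + rho) * (K5 + ln_bm)"
proof (cases upper_nonempty)
  case True
  define S where "S = a + rho"
  have "S \<noteq> 0"
    using a_pos rho_pos by (simp add: S_def)
  then show ?thesis
    unfolding C5r_def C3r_def C5_def C3_def if_P[OF True] K5_def ln_bm_def
    apply (simp only: flip: S_def)
    using nonzero by (simp add: field_simps power2_eq_square; simp add: S_def algebra_simps)
next
  case False
  then show ?thesis
    unfolding C5r_def C3r_def C5_def C3_def if_not_P[OF False] K5_def ln_bm_def
    by (simp add: algebra_simps)
qed

lemma C3r_upper:
  "upper_nonempty \<Longrightarrow> C3r = Am + b * m / (a + rho) *
     ((a + rho - p * rho - (1 - p)^2 * (a + rho)) * lam / (p * (a + rho)) - lam * ln (b * (lam * m) powr (1 - p)))"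
  by (simp add: C3r_def C3_def Am_def C6m_def)

lemma C3r_no_upper:
  "\<not> upper_nonempty \<Longrightarrow> C3r = - Bm + (1 - p)^2 * b powr (p / (p - 1)) / (rho * (1 - p) - a * p)"
  unfolding C3r_def C3_def Bm_def C6m_def by (simp only: if_not_P) simp

lemma lower_ym_eq_middle: "lower ym = middle ym"
proof -
  define S where "S = a + rho"
  define Dd where "Dd = rho * (1 - p) - a * p"
  have S: "S \<noteq> 0" and DD: "Dd \<noteq> 0"
    using a_pos rho_pos denom_pos by (simp_all add: S_def Dd_def)
  have C5: "C5r = C3r + b * m / (a + rho) * (K5 + ln_bm)"
    using C5r_minus_C3r by simp
  have "b powr (rho / a) \<noteq> 0" and "ym powr (- rho / a) \<noteq> 0"
    using b_pos ym_pos by auto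
  then have "lower ym - middle ym
      = m * ym * (K5 / S + 1 / (p * rho) + a^3 / (rho * S^2 * Dd) - (1 - p)^3 / (p * Dd))"
    unfolding lower_def middle_def C5 threshold_powr_eqs(1)[OF m_pos]
      threshold_powr_eqs(2)[OF m_pos, folded ym_def] ym_def[symmetric]
      threshold_powr_eqs(4)[OF m_pos, folded ym_def ln_bm_def] Bm_eq_at_ym
    apply (simp only: flip: S_def Dd_def ym_def ln_bm_def)
    using S DD nonzero ym_pos m_pos by (simp add: field_simps power2_eq_square power3_eq_cube)
  also have "\<dots> = 0"
    using smooth_fit_identities(1)[OF a_pos rho_pos p_nonzero denom_pos] unfolding K5_def S_def Dd_def by simp
  finally show ?thesis
    by simp
qed

lemma lower'_ym_eq_middle': "lower' ym = middle' ym"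
proof -
  define S where "S = a + rho"
  define Dd where "Dd = rho * (1 - p) - a * p"
  have S: "S \<noteq> 0" and DD: "Dd \<noteq> 0"
    using a_pos rho_pos denom_pos by (simp_all add: S_def Dd_def)
  have C5: "C5r = C3r + b * m / (a + rho) * (K5 + ln_bm)"
    using C5r_minus_C3r by simp
  have "b powr (rho / a) \<noteq> 0" and "ym powr (- rho / a) \<noteq> 0"
    using b_pos ym_pos by auto
  then have "lower' ym - middle' ym = m * (K5 / S + 1 / S - a^2 / (S^2 * Dd) + (1 - p)^2 / Dd)"
    unfolding lower'_def middle'_def C5 powr_exp_minus_1[OF ym_pos]
      threshold_powr_eqs(3)[OF m_pos, folded ym_def]
      threshold_powr_eqs(4)[OF m_pos, folded ym_def ln_bm_def] Bm_eq_at_ym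
    apply (simp only: flip: S_def Dd_def ym_def ln_bm_def)
    using S DD nonzero ym_pos m_pos by (simp add: field_simps power2_eq_square power3_eq_cube)
  also have "\<dots> = 0"
    using smooth_fit_identities(2)[OF a_pos rho_pos p_nonzero denom_pos] unfolding K5_def S_def Dd_def by simp
  finally show ?thesis
    by simp
qed

lemma middle_ylm_eq_upper:
  assumes "upper_nonempty"
  shows "middle ylm = upper ylm"
proof -
  have lam: "lam > 0" and n: "lam * m > 0"
    using assms m_pos by simp_all
  define S where "S = a + rho"
  define Dd where "Dd = rho * (1 - p) - a * p"
  define v where "v = ln (b * (lam * m) powr (1 - p))"
  have S: "S \<noteq> 0" and DD: "Dd \<noteq> 0"
    using a_pos rho_pos denom_pos by (simp_all add: S_def Dd_def)
  have "b powr (rho / a) \<noteq> 0" and "ylm powr (- rho / a) \<noteq> 0"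
    using b_pos ylm_pos[OF lam] by auto
  then have "upper ylm - middle ylm
      = (lam * m) * ylm * (- 1 / S + a^3 / (rho * S^2 * Dd) + 1 / (p * rho) - c3 / S - (1 - p)^3 / (p * Dd))"
    unfolding upper_def middle_def C3r_upper[OF assms] threshold_powr_eqs(1)[OF n]
      threshold_powr_eqs(2)[OF n, folded ylm_def] ylm_def[symmetric]
      threshold_powr_eqs(4)[OF n, folded ylm_def v_def] Am_eq_at_ylm[OF lam] c3_def
    apply (simp only: flip: S_def Dd_def ylm_def v_def)
    using S DD nonzero ylm_pos[OF lam] m_pos lam by (simp add: field_simps power2_eq_square power3_eq_cube)
  also have "\<dots> = 0"
    using smooth_fit_identities(3)[OF a_pos rho_pos p_nonzero denom_pos] unfolding c3_def S_def Dd_def by simp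
  finally show ?thesis
    by simp
qed

lemma middle'_ylm_eq_upper':
  assumes "upper_nonempty"
  shows "middle' ylm = upper' ylm"
proof -
  have lam: "lam > 0" and n: "lam * m > 0"
    using assms m_pos by simp_all
  define S where "S = a + rho"
  define Dd where "Dd = rho * (1 - p) - a * p"
  define v where "v = ln (b * (lam * m) powr (1 - p))"
  have S: "S \<noteq> 0" and DD: "Dd \<noteq> 0"
    using a_pos rho_pos denom_pos by (simp_all add: S_def Dd_def)
  have "b powr (rho / a) \<noteq> 0" and "ylm powr (- rho / a) \<noteq> 0"
    using b_pos ylm_pos[OF lam] by auto
  then have "upper' ylm - middle' ylm = (lam * m) * ((1 - p)^2 / Dd - a^2 / (S^2 * Dd) - c3 / S)"
    unfolding upper'_def middle'_def C3r_upper[OF assms] powr_exp_minus_1[OF ylm_pos[OF lam]]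
      threshold_powr_eqs(3)[OF n, folded ylm_def]
      threshold_powr_eqs(4)[OF n, folded ylm_def v_def] Am_eq_at_ylm[OF lam] c3_def
    apply (simp only: flip: S_def Dd_def ylm_def v_def)
    using S DD nonzero ylm_pos[OF lam] m_pos lam by (simp add: field_simps power2_eq_square power3_eq_cube)
  also have "\<dots> = 0"
    using smooth_fit_identities(4)[OF a_pos rho_pos p_nonzero denom_pos] unfolding c3_def S_def Dd_def by simp
  finally show ?thesis
    by simp
qed

lemma b_powr_exp_minus_1: "b powr (- rho / a - 1) = 1 / (b * b powr (rho / a))"
proof -
  have "- rho / a - 1 = - (rho / a + 1)" by simp
  then have "b powr (- rho / a - 1) = inverse (b powr (rho / a + 1))"
    by (simp only: powr_minus)
  also have "b powr (rho / a + 1) = b powr (rho / a) * b"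
    using b_pos by (simp add: powr_add)
  finally show ?thesis by (simp add: field_simps)
qed

lemma upper'_b: "upper' b = 0"
proof -
  define S where "S = a + rho"
  have "S \<noteq> 0" and "b powr (rho / a) \<noteq> 0"
    using a_pos rho_pos b_pos by (simp_all add: S_def)
  then show ?thesis
    unfolding upper'_def b_powr_exp_minus_1 by (simp only: flip: S_def) (use b_pos in \<open>simp add: field_simps\<close>)
qed

lemma common'_b: "common' b = 0"
proof -
  have "b powr (1 - k) * b powr (k - 1) = 1"
    using b_pos by (simp add: powr_add[symmetric])
  moreover have "b powr (rho / a) \<noteq> 0"
    using b_pos by simp
  ultimately show ?thesis
    unfolding common'_def b_powr_exp_minus_1 using b_pos by (simp add: field_simps)
qed

lemma middle'_b: "\<not> upper_nonempty \<Longrightarrow> middle' b = 0"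
proof -
  assume "\<not> upper_nonempty"
  have "p / (p - 1) = 1 + 1 / (p - 1)"
    using p_lt_1 by (simp add: field_simps)
  then have b_powr: "b powr (p / (p - 1)) = b * b powr (1 / (p - 1))"
    using b_pos by (simp add: powr_add)
  define Dd where "Dd = rho * (1 - p) - a * p"
  have "Dd \<noteq> 0" and "b powr (rho / a) \<noteq> 0"
    using denom_pos b_pos by (simp_all add: Dd_def)
  then show ?thesis
    unfolding middle'_def C3r_no_upper[OF \<open>\<not> upper_nonempty\<close>] b_powr_exp_minus_1 b_powr
    by (simp only: flip: Dd_def) (use b_pos nonzero in \<open>simp add: field_simps\<close>)
qed

lemma C6m_nonneg: "C6m \<ge> 0"
  unfolding C6m_def using C6_nonneg[OF a_pos rho_pos b_pos p_nonzero m_ge] .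

lemma common'_mono:
  assumes y1: "0 < y1" and y12: "y1 \<le> y2"
  shows "common' y1 \<le> common' y2"
proof -
  have h1: "y2 powr (- rho / a - 1) \<le> y1 powr (- rho / a - 1)"
    using a_pos rho_pos y1 y12 by (intro powr_mono2') (auto simp: field_simps)
  have h2: "y2 powr (k - 1) \<le> y1 powr (k - 1)"
    using k_le_1 y1 y12 by (intro powr_mono2') auto
  have c: "rho / a * C6m * b powr (rho / a) \<ge> 0"
    using C6m_nonneg a_pos rho_pos by simp
  have "rho / a * C6m * b powr (rho / a) * y2 powr (- rho / a - 1)
      \<le> rho / a * C6m * b powr (rho / a) * y1 powr (- rho / a - 1)"
    using mult_left_mono[OF h1 c] .
  moreover have "z * (b powr (1 - k) * y2 powr (k - 1)) \<le> z * (b powr (1 - k) * y1 powr (k - 1))"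
    using h2 z_nonneg b_pos by (intro mult_left_mono) auto
  ultimately show ?thesis unfolding common'_def by (simp add: algebra_simps)
qed

lemma Am_nonneg: "lam > 0 \<Longrightarrow> Am \<ge> 0"
proof -
  assume lam: "lam > 0"
  have expo: "expo \<le> 0"
    unfolding expo_def using a_pos denom_pos by (simp add: divide_nonpos_pos algebra_simps)
  have "1 powr expo \<le> lam powr expo"
    using expo lam lam_le_1 by (intro powr_mono2') auto
  then have l: "lam powr expo - 1 \<ge> 0" by simp
  have "Bm \<ge> 0"
    unfolding Bm_def Bcoef_def using a_pos rho_pos b_pos denom_pos by (intro mult_nonneg_nonneg) auto
  then show ?thesis using Am_eq l by simp
qed

lemma upper'_strict_mono:
  assumes lam: "lam > 0" and y1: "0 < y1" and y12: "y1 < y2"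
  shows "upper' y1 < upper' y2"
proof -
  have h1: "y2 powr (- rho / a - 1) \<le> y1 powr (- rho / a - 1)"
    using a_pos rho_pos y1 y12 by (intro powr_mono2') (auto simp: field_simps)
  have c: "Am * b powr (rho / a) \<ge> 0" using Am_nonneg[OF lam] by simp
  have A: "Am * b powr (rho / a) * y2 powr (- rho / a - 1)
      \<le> Am * b powr (rho / a) * y1 powr (- rho / a - 1)" using mult_left_mono[OF h1 c] .
  have "ln (y1 / b) < ln (y2 / b)"
    using y1 y12 b_pos by (simp add: divide_strict_right_mono)
  moreover have "lam * m / (a + rho) > 0" using lam m_pos a_pos rho_pos by simp
  ultimately have B: "lam * m / (a + rho) * (ln (y1 / b) + 1) < lam * m / (a + rho) * (ln (y2 / b) + 1)"
    by (intro mult_strict_left_mono) auto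
  show ?thesis unfolding upper'_def using A B by simp
qed

lemma lower'_strict_mono:
  assumes y1: "0 < y1" and y12: "y1 < y2"
  shows "lower' y1 < lower' y2"
proof -
  have "ln (y1 / b) < ln (y2 / b)"
    using y1 y12 b_pos by (simp add: divide_strict_right_mono)
  moreover have "m / (a + rho) > 0" using m_pos a_pos rho_pos by simp
  ultimately have "m / (a + rho) * (ln (y1 / b) + 1) < m / (a + rho) * (ln (y2 / b) + 1)"
    by (intro mult_strict_left_mono) auto
  then show ?thesis unfolding lower'_def by simp
qed

lemma middle'_deriv: "x > 0 \<Longrightarrow> (middle' has_real_derivative middle'' x) (at x)"
proof -
  assume x: "x > 0"
  have f1: "x powr (- rho / a - 1 - 1) = x powr (- rho / a - 2)"
    by (simp add: algebra_simps)
  have f2: "x powr (1 / (p - 1) - 1) = x powr (- rho / a - 2) * x powr expo2"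
  proof -
    have eq: "1 / (p - 1) - 1 = (- rho / a - 2) + expo2"
      by (simp add: expo2_def)
    have "x powr (1 / (p - 1) - 1) = x powr ((- rho / a - 2) + expo2)"
      by (simp only: eq)
    also have "\<dots> = x powr (- rho / a - 2) * x powr expo2"
      by (rule powr_add)
    finally show ?thesis .
  qed
  define Dd where "Dd = rho * (1 - p) - a * p"
  have DD: "Dd \<noteq> 0" using denom_pos by (simp add: Dd_def)
  define X where "X = x powr (- rho / a - 2)"
  define E where "E = x powr expo2"
  define Br where "Br = b powr (rho / a)"
  have eqa: "- 2 - rho / a = - rho / a - 2" by simp
  have fa: "x powr (- 2 - rho / a) = X" unfolding X_def by (simp only: eqa)
  have fb: "x powr (- (rho / a) - 2) = X" by (simp add: X_def)
  have fc: "x powr (- rho / a - 2) = X" by (simp add: X_def)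
  have f2X: "x powr (1 / (p - 1) - 1) = X * E"
    using f2 by (simp add: X_def E_def)
  show ?thesis
    unfolding middle'_def middle''_def
    apply (rule derivative_eq_intros refl | simp add: x fa fb fc f2X)+
    apply (simp only: flip: Dd_def E_def Br_def)
    using nonzero DD x by (simp add: field_simps power2_eq_square)
qed

lemma expo2_pos: "expo2 > 0"
proof -
  have "(rho / a + 1) * (1 - p) > 1"
  proof -
    have "(rho / a + 1) * (1 - p) - 1 = (rho * (1 - p) - a * p) / a"
      using a_pos by (simp add: field_simps)
    moreover have "(rho * (1 - p) - a * p) / a > 0"
      using denom_pos a_pos by simp
    ultimately show ?thesis by linarith
  qed
  then have "rho / a + 1 > 1 / (1 - p)" using p_lt_1 by (simp add: field_simps)
  moreover have "1 / (p - 1) = - (1 / (1 - p))"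
    unfolding minus_divide_right minus_diff_eq ..
  ultimately show ?thesis unfolding expo2_def by linarith
qed

lemma Bm_slope_coefficient:
  "(rho / a + 1) * Bm * b powr (rho / a) = a / ((a + rho) * (rho * (1 - p) - a * p)) * m powr expo"
proof -
  have "(rho / a + 1) * Bm * b powr (rho / a)
      = (rho / a + 1) * (a^2 / ((a + rho)^2 * (rho * (1 - p) - a * p))) * (b powr (rho / a) * bpow) * m powr expo"
    by (simp add: Bm_eq)
  also have "\<dots> = a / ((a + rho) * (rho * (1 - p) - a * p)) * m powr expo"
  proof -
    have "S / a * (a^2 / (S^2 * D)) = a / (S * D)" if "S \<noteq> 0" "D \<noteq> 0" for S D
      using that nonzero by (simp add: field_simps power2_eq_square)
    moreover have "rho / a + 1 = (a + rho) / a"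
      using nonzero by (simp add: field_simps)
    ultimately show ?thesis
      unfolding bpow_inverse using nonzero by simp
  qed
  finally show ?thesis .
qed

text \<open>The bracket in \<open>middle''\<close> increases with \<open>x\<close> and equals \<open>m powr expo / (a + rho)\<close> at \<open>x = ym\<close>.\<close>

lemma middle''_pos:
  assumes x: "x \<ge> ym"
  shows "middle'' x > 0"
proof -
  define D where "D = rho * (1 - p) - a * p"
  have "D > 0" and "0 \<le> (1 - p) / D"
    using denom_pos p_lt_1 by (simp_all add: D_def)
  have "(p - 1) * expo2 = expo"
    unfolding expo2_def expo_def using a_pos p_lt_1 by (simp add: field_simps)
  then have "ym powr expo2 = m powr expo"
    unfolding ym_def by (simp add: powr_powr)
  moreover have "ym powr expo2 \<le> x powr expo2"
    using x ym_pos expo2_pos by (intro powr_mono2) auto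
  ultimately have "m powr expo \<le> x powr expo2"
    by simp
  then have mono: "(1 - p) / D * m powr expo \<le> (1 - p) / D * x powr expo2"
    using \<open>0 \<le> (1 - p) / D\<close> by (rule mult_left_mono)
  have split: "(1 - p) / D - a / ((a + rho) * D) = 1 / (a + rho)"
  proof -
    define S where "S = a + rho"
    have "S \<noteq> 0"
      using nonzero by (simp add: S_def)
    then have "(1 - p) / D - a / (S * D) = ((1 - p) * S - a) / (S * D)"
      using \<open>D > 0\<close> by (simp add: field_simps)
    also have "(1 - p) * S - a = D"
      by (simp add: S_def D_def algebra_simps)
    finally show ?thesis
      using \<open>D > 0\<close> by (simp add: S_def)
  qed
  have "0 < m powr expo / (a + rho)"
    using m_pos a_pos rho_pos by simp
  also have "m powr expo / (a + rho) = (1 - p) / D * m powr expo - a / ((a + rho) * D) * m powr expo"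
    by (simp only: left_diff_distrib[symmetric] split) simp
  also have "\<dots> \<le> (1 - p) / D * x powr expo2 - (rho / a + 1) * Bm * b powr (rho / a)"
    using mono by (simp add: Bm_slope_coefficient D_def)
  finally show ?thesis
    unfolding middle''_def D_def[symmetric] using x ym_pos by simp
qed

lemma middle'_strict_mono:
  assumes y1: "ym \<le> y1" and y12: "y1 < y2"
  shows "middle' y1 < middle' y2"
proof (rule DERIV_pos_imp_increasing[OF y12])
  fix x assume "y1 \<le> x" "x \<le> y2"
  then have x: "x \<ge> ym" using y1 by simp
  have "x > 0" using x ym_pos by simp
  then show "\<exists>y. DERIV middle' x :> y \<and> 0 < y"
    using middle'_deriv middle''_pos[OF x] by blast
qed

lemma branch_derivs:
  assumes "0 < y"
  shows "(v_upper has_real_derivative v_upper' y) (at y)"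
    and "(v_middle has_real_derivative v_middle' y) (at y)"
    and "(v_lower has_real_derivative v_lower' y) (at y)"
  using assms unfolding v_upper_def v_middle_def v_lower_def v_upper'_def v_middle'_def v_lower'_def
  by (auto intro!: DERIV_add common_deriv upper_deriv middle_deriv lower_deriv)

lemma strict_mono_on_common'_add:
  assumes lo: "0 < lo" and P: "\<And>u v. lo \<le> u \<Longrightarrow> u < v \<Longrightarrow> P u < P v"
  shows "strict_mono_on {lo..hi} (\<lambda>y. common' y + P y)"
proof (rule strict_mono_onI)
  fix u v assume "u \<in> {lo..hi}" and "v \<in> {lo..hi}" and "u < v"
  then have "common' u \<le> common' v" and "P u < P v"
    using lo by (auto intro: common'_mono P)
  then show "common' u + P u < common' v + P v"
    by simp
qed

lemma branch_derivs_strict_mono: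
  shows "0 < lam \<Longrightarrow> strict_mono_on {ylm..hi} v_upper'"
    and "strict_mono_on {ym..hi} v_middle'"
    and "0 < lo \<Longrightarrow> strict_mono_on {lo..hi} v_lower'"
  unfolding v_upper'_def v_middle'_def v_lower'_def
  using ylm_pos ym_pos
  by (auto intro!: strict_mono_on_common'_add upper'_strict_mono middle'_strict_mono lower'_strict_mono)

lemma lower_middle_match: "v_lower ym = v_middle ym" "v_lower' ym = v_middle' ym"
  unfolding v_lower_def v_middle_def v_lower'_def v_middle'_def
  by (simp_all add: lower_ym_eq_middle lower'_ym_eq_middle')

lemma middle_upper_match: "upper_nonempty \<Longrightarrow> v_middle ylm = v_upper ylm \<and> v_middle' ylm = v_upper' ylm"
  unfolding v_upper_def v_middle_def v_upper'_def v_middle'_def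
  by (simp add: middle_ylm_eq_upper middle'_ylm_eq_upper')

lemma vhat_piecewise_C1_without_upper:
  assumes "\<not> upper_nonempty"
  obtains g g' where "\<And>y. y \<in> {ystar a rho b lam p m..b} \<Longrightarrow> vhat a rho b lam p k y z m = g y"
    and "\<And>y. 0 < y \<Longrightarrow> (g has_real_derivative g' y) (at y)"
    and "strict_mono_on {ystar a rho b lam p m..b} g'" and "g' b = 0"
proof (rule that[of "\<lambda>y. if ym < y then v_middle y else v_lower y"
      "\<lambda>y. if ym < y then v_middle' y else v_lower' y"])
  fix y assume "y \<in> {ystar a rho b lam p m..b}"
  then have "\<not> (0 < lam \<and> ylm < y)"
    using ylm_gt_b[OF assms] by force
  then show "vhat a rho b lam p k y z m = (if ym < y then v_middle y else v_lower y)"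
    unfolding vhat_eq_regions by (simp only: if_not_P if_False)
next
  fix y :: real assume "0 < y"
  then show "((\<lambda>y. if ym < y then v_middle y else v_lower y) has_real_derivative
      (if ym < y then v_middle' y else v_lower' y)) (at y)"
    using branch_derivs ym_pos lower_middle_match by (intro DERIV_if_less[where S = "{0<..}"]) auto
next
  have "strict_mono_on {ystar a rho b lam p m..ym} v_lower'"
    using ystar_pos_le_ym(1) by (rule branch_derivs_strict_mono(3))
  then show "strict_mono_on {ystar a rho b lam p m..b} (\<lambda>y. if ym < y then v_middle' y else v_lower' y)"
    using branch_derivs_strict_mono(2) lower_middle_match(2) by (rule strict_mono_on_if_less)
next
  have "v_middle' b = 0"
    by (simp add: v_middle'_def common'_b middle'_b[OF assms])
  then show "(if ym < b then v_middle' b else v_lower' b) = 0"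
    using lower_middle_match(2) ym_le_b by (cases "ym < b") simp_all
qed

lemma vhat_piecewise_C1_with_upper:
  assumes "upper_nonempty"
  obtains g g' where "\<And>y. y \<in> {ystar a rho b lam p m..b} \<Longrightarrow> vhat a rho b lam p k y z m = g y"
    and "\<And>y. 0 < y \<Longrightarrow> (g has_real_derivative g' y) (at y)"
    and "strict_mono_on {ystar a rho b lam p m..b} g'" and "g' b = 0"
proof -
  have "0 < lam" and "ym \<le> ylm" and "ylm \<le> b"
    using assms ym_le_ylm ylm_le_b by simp_all
  note match = middle_upper_match[OF assms]
  define w w' where "w = (\<lambda>y. if ylm < y then v_upper y else v_middle y)"
    and "w' = (\<lambda>y. if ylm < y then v_upper' y else v_middle' y)"
  have w_deriv: "(w has_real_derivative w' y) (at y)" if "0 < y" for y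
    unfolding w_def w'_def
    using that branch_derivs ylm_pos[OF \<open>0 < lam\<close>] match by (intro DERIV_if_less[where S = "{0<..}"]) auto
  have lower_w_match: "v_lower ym = w ym" "v_lower' ym = w' ym"
    using lower_middle_match \<open>ym \<le> ylm\<close> by (simp_all add: w_def w'_def)
  have "strict_mono_on {ym..ylm} v_middle'"
    by (rule branch_derivs_strict_mono(2))
  then have w'_mono: "strict_mono_on {ym..b} w'"
    unfolding w'_def using branch_derivs_strict_mono(1)[OF \<open>0 < lam\<close>] match
    by (intro strict_mono_on_if_less) auto
  have "v_upper' b = 0"
    by (simp add: v_upper'_def common'_b upper'_b)
  then have "w' b = 0"
    using match \<open>ylm \<le> b\<close> by (cases "ylm < b") (simp_all add: w'_def)
  show thesis
  proof (rule that[of "\<lambda>y. if ym < y then w y else v_lower y" "\<lambda>y. if ym < y then w' y else v_lower' y"])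
    fix y assume "y \<in> {ystar a rho b lam p m..b}"
    then show "vhat a rho b lam p k y z m = (if ym < y then w y else v_lower y)"
      unfolding vhat_eq_regions w_def using \<open>0 < lam\<close> \<open>ym \<le> ylm\<close> by auto
  next
    fix y :: real assume "0 < y"
    then show "((\<lambda>y. if ym < y then w y else v_lower y) has_real_derivative
        (if ym < y then w' y else v_lower' y)) (at y)"
      using branch_derivs w_deriv ym_pos lower_w_match by (intro DERIV_if_less[where S = "{0<..}"]) auto
  next
    have "strict_mono_on {ystar a rho b lam p m..ym} v_lower'"
      using ystar_pos_le_ym(1) by (rule branch_derivs_strict_mono(3))
    then show "strict_mono_on {ystar a rho b lam p m..b} (\<lambda>y. if ym < y then w' y else v_lower' y)"
      using w'_mono lower_w_match(2) by (rule strict_mono_on_if_less)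
  next
    show "(if ym < b then w' b else v_lower' b) = 0"
      using \<open>w' b = 0\<close> lower_w_match(2) ym_le_b by (cases "ym < b") simp_all
  qed
qed

lemma vhat_continuous_strict_convex_antimono:
  defines "I \<equiv> {ystar a rho b lam p m..b}"
  shows "continuous_on I (\<lambda>y. vhat a rho b lam p k y z m)
    \<and> strict_convex_on I (\<lambda>y. vhat a rho b lam p k y z m)
    \<and> antimono_on I (\<lambda>y. vhat a rho b lam p k y z m)"
proof -
  obtain g g' where eq: "\<And>y. y \<in> I \<Longrightarrow> vhat a rho b lam p k y z m = g y"
    and deriv: "\<And>y. 0 < y \<Longrightarrow> (g has_real_derivative g' y) (at y)"
    and mono: "strict_mono_on I g'" and "g' b = 0"
    unfolding I_def using vhat_piecewise_C1_with_upper vhat_piecewise_C1_without_upper by blast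
  have "b \<in> I"
    using ystar_pos_le_ym ym_le_b by (simp add: I_def)
  have deriv_I: "(g has_real_derivative g' y) (at y)" if "y \<in> I" for y
    using that ystar_pos_le_ym(1) by (intro deriv) (simp add: I_def)
  have "g' y \<le> 0" if "y \<in> I" for y
  proof (cases "y = b")
    case False
    with that have "y < b"
      by (simp add: I_def)
    with \<open>g' b = 0\<close> show ?thesis
      using strict_mono_onD[OF mono that \<open>b \<in> I\<close>] by simp
  qed (simp add: \<open>g' b = 0\<close>)
  then have "antimono_on I g"
    using deriv_I unfolding I_def by (intro antimono_on_if_deriv_nonpos) auto
  moreover have "continuous_on I g"
    using deriv_I by (rule has_real_derivative_imp_continuous_on)
  moreover have "strict_convex_on I g"
    using deriv_I mono unfolding I_def by (rule strict_convex_on_if_deriv_strict_mono)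
  ultimately show ?thesis
    using eq strict_convex_on_cong[of I g] unfolding monotone_on_def by simp
qed

end

section \<open>The model constants\<close>

lemma alphaC_pos:
  fixes mu :: "real^'n" and sig :: "real^'n^'n"
  assumes "invertible sig" and "mu \<noteq> 0"
  shows "alphaC mu sig > 0"
proof -
  define P where "P = sig ** transpose sig"
  have "invertible P"
    unfolding P_def by (intro invertible_mult assms(1) transpose_invertible)
  then have P_inv: "P ** matrix_inv P = mat 1"
    unfolding invertible_def matrix_inv_def by (rule someI_ex[THEN conjunct1])
  define w where "w = matrix_inv P *v mu"
  define v where "v = transpose sig *v w"
  have mu_eq: "mu = sig *v v"
    unfolding v_def w_def matrix_vector_mul_assoc matrix_mul_assoc P_def[symmetric] P_inv by simp
  have "mu \<bullet> w = w \<bullet> (sig *v v)"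
    by (simp add: mu_eq inner_commute)
  also have "\<dots> = v \<bullet> v"
    by (simp add: dot_lmul_matrix v_def)
  finally have "mu \<bullet> w = v \<bullet> v" .
  moreover have "v \<noteq> 0"
    using assms(2) mu_eq by auto
  ultimately show ?thesis
    unfolding alphaC_def P_def[symmetric] w_def[symmetric] by simp
qed

lemma kappaC_pos_le_1:
  assumes "a > 0" and "muZ < rho" and "e \<le> muZ"
  shows "0 < kappaC a e rho muZ" and "kappaC a e rho muZ \<le> 1"
proof -
  define B where "B = rho - e - a"
  have "B < sqrt (B^2 + 4 * a * (rho - muZ))"
    using assms real_sqrt_less_mono[of "B^2" "B^2 + 4 * a * (rho - muZ)"] by (simp add: real_sqrt_abs)
  then show "0 < kappaC a e rho muZ"
    unfolding kappaC_def B_def[symmetric] using assms(1) by simp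
  have "B^2 + 4 * a * (rho - muZ) \<le> (2 * a + B)^2"
    using assms by (simp add: B_def power2_eq_square algebra_simps mult_left_mono)
  moreover have "2 * a + B \<ge> 0"
    using assms by (simp add: B_def)
  ultimately have "sqrt (B^2 + 4 * a * (rho - muZ)) \<le> 2 * a + B"
    by (metis real_sqrt_abs real_sqrt_le_mono abs_of_nonneg)
  then show "kappaC a e rho muZ \<le> 1"
    unfolding kappaC_def B_def[symmetric] using assms(1) by simp
qed

lemma rho0C_lessD:
  assumes "rho0C a muZ p < rho" and "a > 0" and "rho > 0" and "p < 1"
  shows "muZ < rho" and "rho * (1 - p) - a * p > 0"
proof -
  show "muZ < rho"
    using assms(1) unfolding rho0C_def by (auto split: if_splits)
  show "rho * (1 - p) - a * p > 0"
  proof (cases "0 < p")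
    case True
    then have "a * p / (1 - p) < rho"
      using assms(1) unfolding rho0C_def by auto
    then show ?thesis
      using assms(4) by (simp add: field_simps)
  next
    case False
    then have "a * p \<le> 0"
      using assms(2) by (simp add: mult_nonneg_nonpos)
    moreover have "rho * (1 - p) > 0"
      using assms(3,4) by simp
    ultimately show ?thesis
      by simp
  qed
qed

theorem lemma3p2:
  fixes mu :: "real^'n" and sig :: "real^'n^'n" and gam :: "real^'n"
    and muZ sZ rho b lam p :: real
  assumes sig_inv: "invertible sig"
    and mu_nz: "mu \<noteq> 0"
    and sZ: "sZ \<ge> 0"
    and gam: "norm gam = 1"
    and rho_pos: "rho > 0"
    and b_pos: "b > 0"
    and lam: "0 \<le> lam" "lam \<le> 1"
    and p: "p < 1" "p \<noteq> 0"
    and muZ_eta: "muZ \<ge> etaC mu sig sZ gam"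
    and rho_rho0: "rho > rho0C (alphaC mu sig) muZ p"
  shows "\<forall>z m. z \<ge> 0 \<and> m \<ge> b powr (1 / (p - 1)) \<longrightarrow>
     (let a = alphaC mu sig;
          k = kappaC a (etaC mu sig sZ gam) rho muZ;
          I = {ystar a rho b lam p m .. b};
          f = (\<lambda>y. vhat a rho b lam p k y z m)
      in continuous_on I f \<and> strict_convex_on I f \<and> antimono_on I f)"
proof -
  have a_pos: "alphaC mu sig > 0"
    using sig_inv mu_nz by (rule alphaC_pos)
  note rho_bounds = rho0C_lessD[OF rho_rho0 a_pos rho_pos p(1)]
  note kappa_bounds = kappaC_pos_le_1[OF a_pos rho_bounds(1) muZ_eta]
  have setting:
    "vhat_setting (alphaC mu sig) rho b lam p (kappaC (alphaC mu sig) (etaC mu sig sZ gam) rho muZ) z m"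
    if "z \<ge> 0 \<and> m \<ge> b powr (1 / (p - 1))" for z m
    using a_pos rho_pos b_pos lam p rho_bounds(2) kappa_bounds that by unfold_locales auto
  show ?thesis
    unfolding Let_def by (intro allI impI vhat_setting.vhat_continuous_strict_convex_antimono setting)
qed

end
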